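(* Let $k\in\,]0,2]$ and let $f_0$ be a spherically symmetric static solution of the Einstein–Vlasov system of the form $f_0=\big(1-e^{\mu_0(r)-\mu_0(R_0)}\mathcal E\big)_+^k$, where $\mathcal E=\sqrt{1+|v|^2}=\sqrt{1+w^2+\ell^2/r^2}$. Then $$\mathcal D(f_0)=-4\pi e^{-\mu_0(R_0)}\int_0^{R_0}r^2(p_0+\rho_0)\,e^{\mu_0+\lambda_0}\,dr.$$
   Context: Notation: $r=|x|$, $w=\frac{x\cdot v}{r}$, $\ell=|x\wedge v|$. $\chi(s)=\frac{k}{k+1}s^{1+1/k}$, $\mathcal D(f)=\int\int e^{\lambda_f(|x|)}(\chi(f)-f)\,dx\,dv$. For $f_0$: $\rho_0(r)=\int\sqrt{1+|v|^2}f_0\,dv$, $p_0(r)=\int\frac{w^2}{\sqrt{1+|v|^2}}f_0\,dv$ (radial pressure), $m_0(r)=4\pi\int_0^rs^2\rho_0(s)ds$, $e^{-2\lambda_0}=1-2m_0/r$. A static solution of this form means that $\mu_0$ is the metric function solving $\mu_0'(r)=e^{2\lambda_0(r)}\big(\frac{m_0(r)}{r^2}+4\pi r p_0(r)\big)$ with $\mu_0(r)\to0$ as $r\to\infty$, consistently with $f_0$ being given by the displayed formula, and $R_0>0$ is the radius of the spatial support of $f_0$ (so $f_0(x,v)=0$ for $|x|\ge R_0$); the metric is $-e^{2\mu_0}dt^2+e^{2\lambda_0}dr^2+r^2d\Omega^2$. *)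

theory Defs
  imports "HOL-Analysis.Analysis"
begin

definition energy :: "real^3 \<Rightarrow> real" where
  "energy v = sqrt (1 + (norm v)^2)"

definition chi :: "real \<Rightarrow> real \<Rightarrow> real" where
  "chi k s = k / (k + 1) * s powr (1 + 1 / k)"

definition f_static :: "(real \<Rightarrow> real) \<Rightarrow> real \<Rightarrow> real \<Rightarrow> real^3 \<Rightarrow> real^3 \<Rightarrow> real" where
  "f_static mu R0 k x v = (max 0 (1 - exp (mu (norm x) - mu R0) * energy v)) powr k"

definition rho_of :: "(real^3 \<Rightarrow> real^3 \<Rightarrow> real) \<Rightarrow> real^3 \<Rightarrow> real" where
  "rho_of f x = (\<integral>v. energy v * f x v \<partial>lborel)"

definition prad_of :: "(real^3 \<Rightarrow> real^3 \<Rightarrow> real) \<Rightarrow> real^3 \<Rightarrow> real" where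
  "prad_of f x = (\<integral>v. ((x \<bullet> v) / norm x)^2 / energy v * f x v \<partial>lborel)"

definition mass_of :: "(real \<Rightarrow> real) \<Rightarrow> real \<Rightarrow> real" where
  "mass_of rho r = 4 * pi * (\<integral>s\<in>{0..r}. s^2 * rho s \<partial>lborel)"

text \<open>lambda determined by exp(-2 lambda) = 1 - 2m/r.\<close>
definition lambda_of :: "(real \<Rightarrow> real) \<Rightarrow> real \<Rightarrow> real" where
  "lambda_of m r = - ln (1 - 2 * m r / r) / 2"

text \<open>D(f) = int int exp(lambda_f(|x|)) (chi(f) - f) dx dv  (lambda_f supplied as argument).\<close>
definition calD :: "real \<Rightarrow> (real \<Rightarrow> real) \<Rightarrow> (real^3 \<Rightarrow> real^3 \<Rightarrow> real) \<Rightarrow> real" where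
  "calD k lam f = (\<integral>z. exp (lam (norm (fst z))) * (chi k (f (fst z) (snd z)) - f (fst z) (snd z))
                     \<partial>(lborel :: ((real^3) \<times> (real^3)) measure))"

end

theory Submission
  imports Defs
begin

(* Each velocity fibre of f0 is a polytrope (1 - c E)_+^k with c = exp (mu0 |x| - mu0 R0), and chi
   maps it to k/(k+1) (1 - c E)_+^(k+1).  Splitting (1 - c E)_+^k = (1 - c E)_+^(k+1) + c E (1 - c E)_+^k
   and integrating the v_1-derivative of v_1 (1 - c E)_+^(k+1) gives
   int (1 - c E)_+^(k+1) dv = (k+1) c int v_1^2/E (1 - c E)_+^k dv, hence
   int (chi(f0) - f0) dv = -c (rho0 + p0).  The x-integral of this radial function is taken in polar
   coordinates, |x| having density 4 pi r^2 on R^3.  Fubini is only applied to the nonnegative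
   integrand f0 - chi(f0), so no integrability in x is needed. *)

definition polytrope :: "real \<Rightarrow> real \<Rightarrow> real^3 \<Rightarrow> real" where
  "polytrope k c v = max 0 (1 - c * energy v) powr k"

lemma energy_pos: "0 < energy v"
  by (simp add: energy_def add_pos_nonneg)

lemma norm_less_energy: "norm v < energy v"
  unfolding energy_def by (rule real_less_rsqrt) simp

lemma continuous_on_energy: "continuous_on A energy"
  unfolding energy_def[abs_def] by (intro continuous_intros)

lemma borel_measurable_energy [measurable (raw)]:
  assumes [measurable]: "g \<in> borel_measurable M"
  shows "(\<lambda>x. energy (g x)) \<in> borel_measurable M"
  unfolding energy_def by measurable

lemma borel_measurable_polytrope [measurable (raw)]:
  assumes [measurable]: "c \<in> borel_measurable M" "g \<in> borel_measurable M"
  shows "(\<lambda>x. polytrope k (c x) (g x)) \<in> borel_measurable M"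
  unfolding polytrope_def by measurable

lemma polytrope_nonneg: "0 \<le> polytrope k c v"
  by (simp add: polytrope_def)

lemma polytrope_le_1:
  assumes "0 \<le> k" "0 \<le> c" shows "polytrope k c v \<le> 1"
proof -
  have "max 0 (1 - c * energy v) \<le> 1" using assms energy_pos[of v] by auto
  then show ?thesis
    using powr_mono2[of k "max 0 (1 - c * energy v)" 1] assms by (simp add: polytrope_def)
qed

lemma polytrope_eq_0:
  assumes "0 < c" "1 / c \<le> norm v" shows "polytrope k c v = 0"
proof -
  have "1 \<le> c * norm v" using assms by (simp add: field_simps)
  also have "\<dots> < c * energy v" using norm_less_energy[of v] assms by simp
  finally show ?thesis by (simp add: polytrope_def)
qed

lemma polytrope_eq_plus_1: "polytrope k c v = polytrope (k + 1) c v + c * (energy v * polytrope k c v)"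
  by (cases "0 < 1 - c * energy v") (auto simp: polytrope_def powr_add algebra_simps)

lemma chi_polytrope:
  assumes "0 < k" shows "chi k (polytrope k c v) = k / (k + 1) * polytrope (k + 1) c v"
proof -
  have "k * (1 + 1 / k) = k + 1" using assms by (simp add: field_simps)
  then show ?thesis by (simp add: chi_def polytrope_def powr_powr)
qed

lemma chi_polytrope_le:
  assumes "0 < k" "0 \<le> c" shows "chi k (polytrope k c v) \<le> polytrope k c v"
proof -
  have "k / (k + 1) * polytrope (k + 1) c v \<le> 1 * polytrope (k + 1) c v"
    using assms by (intro mult_right_mono polytrope_nonneg) auto
  also have "\<dots> \<le> polytrope k c v"
  proof -
    have "0 \<le> c * (energy v * polytrope k c v)"
      using assms energy_pos[of v] polytrope_nonneg[of k c v] by simp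
    then show ?thesis
      using polytrope_eq_plus_1[of k c v] by simp
  qed
  finally show ?thesis
    using chi_polytrope[OF assms(1)] by simp
qed

lemma integrable_bounded_support:
  fixes F :: "'a::euclidean_space \<Rightarrow> real"
  assumes "F \<in> borel_measurable borel"
    and "\<And>v. R < norm v \<Longrightarrow> F v = 0" and "\<And>v. \<bar>F v\<bar> \<le> B"
  shows "integrable lborel F"
proof (rule Bochner_Integration.integrable_bound)
  show "integrable lborel (\<lambda>v. B * indicator (cball 0 R) v :: real)"
    by (intro integrable_mult_right integrable_real_indicator emeasure_bounded_finite) auto
  show "AE v in lborel. norm (F v) \<le> norm (B * indicator (cball 0 R) v :: real)"
  proof (rule AE_I2)
    fix v :: 'a
    show "norm (F v) \<le> norm (B * indicator (cball 0 R) v :: real)"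
      using assms(2,3)[of v] abs_ge_zero[of "F v"] by (cases "v \<in> cball 0 R") auto
  qed
qed (use assms(1) in simp)

lemma integrable_continuous_times_polytrope:
  assumes "0 \<le> k" "0 < c" and g: "continuous_on UNIV g"
  shows "integrable lborel (\<lambda>v. g v * polytrope k c v)"
proof -
  have "compact (g ` cball 0 (1 / c))"
    by (rule compact_continuous_image) (use g continuous_on_subset in auto)
  then obtain B where "\<forall>y \<in> g ` cball 0 (1 / c). norm y \<le> B"
    using compact_imp_bounded bounded_iff by blast
  then have B: "\<And>v. v \<in> cball 0 (1 / c) \<Longrightarrow> \<bar>g v\<bar> \<le> B"
    by auto
  have [measurable]: "g \<in> borel_measurable borel"
    using g by (rule borel_measurable_continuous_onI)
  show ?thesis
  proof (rule integrable_bounded_support[where R="1 / c" and B=B])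
    show "(\<lambda>v. g v * polytrope k c v) \<in> borel_measurable borel"
      by measurable
  next
    fix v :: "real^3"
    show "\<bar>g v * polytrope k c v\<bar> \<le> B"
    proof (cases "v \<in> cball 0 (1 / c)")
      case True
      have "\<bar>g v\<bar> * polytrope k c v \<le> B * 1"
        using B[OF True] polytrope_nonneg polytrope_le_1 assms
        by (intro mult_mono) (auto intro: order_trans[OF abs_ge_zero])
      then show ?thesis by (simp add: abs_mult polytrope_nonneg)
    next
      case False
      then show ?thesis
        using polytrope_eq_0[of c v k] B[of 0] assms by (simp add: dist_norm)
    qed
  qed (use polytrope_eq_0 assms in simp)
qed

lemma has_real_derivative_pos_part_powr:
  fixes k u :: real
  assumes k: "0 < k"
  shows "((\<lambda>u. max 0 u powr (k + 1)) has_real_derivative (k + 1) * max 0 u powr k) (at u)"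
proof (cases u "0 :: real" rule: linorder_cases)
  case less
  have "((\<lambda>u. 0) has_real_derivative (k + 1) * max 0 u powr k) (at u)"
    using less by simp
  then show ?thesis
    by (rule has_field_derivative_transform_within_open[where S="{..<0}"]) (use less in auto)
next
  case greater
  have "((\<lambda>u. u powr (k + 1)) has_real_derivative (k + 1) * max 0 u powr k) (at u)"
    using greater by (auto intro!: derivative_eq_intros simp: powr_diff)
  then show ?thesis
    by (rule has_field_derivative_transform_within_open[where S="{0<..}"]) (use greater in auto)
next
  case equal
  have "((\<lambda>y. max 0 y powr k) \<longlongrightarrow> 0) (at 0)"
    by (rule tendsto_zero_powrI) (auto intro!: tendsto_eq_intros simp: k)
  then have "((\<lambda>y. (max 0 y powr (k + 1) - max 0 0 powr (k + 1)) / (y - 0)) \<longlongrightarrow> 0) (at 0)"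
  proof (rule Lim_transform_eventually)
    have "max 0 y powr k = (max 0 y powr (k + 1) - max 0 0 powr (k + 1)) / (y - 0)" if "y \<noteq> 0" for y :: real
      using that by (cases "y > 0") (auto simp: powr_add)
    then show "\<forall>\<^sub>F y in at 0. max 0 y powr k = (max 0 y powr (k + 1) - max 0 0 powr (k + 1)) / (y - 0)"
      by (auto simp: eventually_at_filter)
  qed
  then show ?thesis using equal k by (simp add: has_field_derivative_iff)
qed

lemma norm_add_scaleR_axis_1_squared:
  fixes v :: "real^3"
  shows "(norm (v + t *\<^sub>R axis 1 1))^2 = (norm v)^2 + 2 * t * v$1 + t^2"
proof -
  have "(norm (v + t *\<^sub>R axis 1 1))^2 = (v + t *\<^sub>R axis 1 1) \<bullet> (v + t *\<^sub>R axis 1 1)"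
    by (rule power2_norm_eq_inner)
  also have "\<dots> = v \<bullet> v + 2 * t * v$1 + t^2"
    by (simp add: inner_axis inner_commute power2_eq_square algebra_simps)
  finally show ?thesis
    by (simp add: power2_norm_eq_inner)
qed

lemma polytrope_line_has_derivative:
  fixes v :: "real^3"
  assumes k: "0 < k"
  shows "((\<lambda>t. (v + t *\<^sub>R axis 1 1)$1 * polytrope (k + 1) c (v + t *\<^sub>R axis 1 1)) has_real_derivative
           polytrope (k + 1) c v - (k + 1) * c * ((v$1)^2 / energy v * polytrope k c v)) (at 0)"
proof -
  define E where "E t = sqrt (1 + ((norm v)^2 + 2 * t * v$1 + t^2))" for t
  have E0: "E 0 = energy v"
    by (simp add: E_def energy_def)
  have line: "(v + t *\<^sub>R axis 1 1)$1 * polytrope (k + 1) c (v + t *\<^sub>R axis 1 1)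
      = (v$1 + t) * max 0 (1 - c * E t) powr (k + 1)" for t
  proof -
    have "(v + t *\<^sub>R axis 1 1)$1 = v$1 + t"
      by (simp add: axis_def)
    then show ?thesis
      by (simp add: polytrope_def energy_def E_def norm_add_scaleR_axis_1_squared)
  qed
  have "(E has_real_derivative v$1 / energy v) (at 0)"
  proof -
    have "0 < 1 + (norm v)^2"
      by (simp add: add_pos_nonneg)
    then show ?thesis
      unfolding E_def by (auto intro!: derivative_eq_intros simp: energy_def field_simps)
  qed
  then have "((\<lambda>t. 1 - c * E t) has_real_derivative - c * (v$1 / energy v)) (at 0)"
    by (auto intro!: derivative_eq_intros)
  from DERIV_chain2[OF has_real_derivative_pos_part_powr[OF k] this]
  have dP: "((\<lambda>t. max 0 (1 - c * E t) powr (k + 1)) has_real_derivative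
      (k + 1) * polytrope k c v * (- c * (v$1 / energy v))) (at 0)"
    by (simp add: E0 polytrope_def)
  have dlin: "((\<lambda>t. v$1 + t) has_real_derivative 1) (at 0)"
    by (auto intro!: derivative_eq_intros)
  show ?thesis
    unfolding line
    by (rule DERIV_cong[OF DERIV_mult[OF dlin dP]])
      (simp add: E0 polytrope_def power2_eq_square algebra_simps add_divide_distrib)
qed

lemma polytrope_line_derivative_bound:
  fixes v :: "real^3"
  assumes "0 < k" "0 < c"
  shows "\<bar>polytrope (k + 1) c v - (k + 1) * c * ((v$1)^2 / energy v * polytrope k c v)\<bar> \<le> k + 2"
proof -
  define b where "b = c * ((v$1)^2 / energy v * polytrope k c v)"
  have "\<bar>v$1\<bar>^2 \<le> (energy v)^2"
    using component_le_norm_cart[of v 1] norm_less_energy[of v] by (intro power_mono) auto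
  then have "(v$1)^2 / energy v \<le> energy v"
    using energy_pos[of v] by (simp add: divide_le_eq power2_eq_square)
  then have "(v$1)^2 / energy v * polytrope k c v \<le> energy v * polytrope k c v"
    by (rule mult_right_mono) (rule polytrope_nonneg)
  then have "b \<le> c * (energy v * polytrope k c v)"
    unfolding b_def by (rule mult_left_mono) (use assms(2) in simp)
  also have "\<dots> \<le> 1"
    using polytrope_eq_plus_1[of k c v] polytrope_le_1[of k c v] polytrope_nonneg[of "k + 1" c v] assms
    by linarith
  finally have "(k + 1) * b \<le> (k + 1) * 1"
    by (rule mult_left_mono) (use assms in simp)
  moreover have "0 \<le> (k + 1) * b"
    using assms energy_pos[of v] polytrope_nonneg[of k c v] by (simp add: b_def)
  moreover have "0 \<le> polytrope (k + 1) c v" "polytrope (k + 1) c v \<le> 1"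
    using polytrope_nonneg polytrope_le_1 assms by auto
  ultimately show ?thesis
    by (simp add: b_def abs_le_iff mult.assoc)
qed

lemma integral_lborel_translate:
  fixes f :: "'a::euclidean_space \<Rightarrow> real"
  assumes "f \<in> borel_measurable borel"
  shows "(\<integral>v. f (v + a) \<partial>lborel) = (\<integral>v. f v \<partial>lborel)"
  using integral_distr[of "(+) a" lborel borel f] assms
  by (simp add: lborel_distr_plus add.commute)

lemma integrable_lborel_translate:
  fixes f :: "'a::euclidean_space \<Rightarrow> real"
  assumes "integrable lborel f"
  shows "integrable lborel (\<lambda>v. f (v + a))"
  using integrable_distr_eq[of "(+) a" lborel borel f] assms
  by (simp add: lborel_distr_plus add.commute)

lemma directional_difference_bound:
  fixes \<psi> \<psi>' :: "'a::real_normed_vector \<Rightarrow> real"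
  assumes deriv: "\<And>v. ((\<lambda>t. \<psi> (v + t *\<^sub>R e)) has_real_derivative \<psi>' v) (at 0)"
    and bound: "\<And>v. \<bar>\<psi>' v\<bar> \<le> B" and "0 < h"
  shows "\<bar>\<psi> (v + h *\<^sub>R e) - \<psi> v\<bar> \<le> B * h"
proof -
  have line_deriv: "((\<lambda>t. \<psi> (v + t *\<^sub>R e)) has_real_derivative \<psi>' (v + t *\<^sub>R e)) (at t)" for t
    using deriv[of "v + t *\<^sub>R e"] DERIV_shift[of "\<lambda>t. \<psi> (v + t *\<^sub>R e)" _ 0 t]
    by (simp add: scaleR_add_left ac_simps)
  obtain z where "\<psi> (v + h *\<^sub>R e) - \<psi> (v + 0 *\<^sub>R e) = (h - 0) * \<psi>' (v + z *\<^sub>R e)"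
    using MVT2[OF \<open>0 < h\<close>, of "\<lambda>t. \<psi> (v + t *\<^sub>R e)" "\<lambda>t. \<psi>' (v + t *\<^sub>R e)"] line_deriv
    by blast
  then show ?thesis
    using bound[of "v + z *\<^sub>R e"] \<open>0 < h\<close> by (simp add: abs_mult mult.commute)
qed

lemma integral_directional_derivative_eq_0:
  fixes \<psi> \<psi>' :: "'a::euclidean_space \<Rightarrow> real"
  assumes int: "integrable lborel \<psi>" and [measurable]: "\<psi>' \<in> borel_measurable borel"
    and supp: "\<And>v. R < norm v \<Longrightarrow> \<psi> v = 0"
    and deriv: "\<And>v. ((\<lambda>t. \<psi> (v + t *\<^sub>R e)) has_real_derivative \<psi>' v) (at 0)"
    and bound: "\<And>v. \<bar>\<psi>' v\<bar> \<le> B"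
  shows "(\<integral>v. \<psi>' v \<partial>lborel) = 0"
proof -
  have [measurable]: "\<psi> \<in> borel_measurable borel"
    using borel_measurable_integrable[OF int] by simp
  define h :: "nat \<Rightarrow> real" where "h n = 1 / Suc n" for n
  define s where "s n v = (\<psi> (v + h n *\<^sub>R e) - \<psi> v) / h n" for n v
  have [measurable]: "s n \<in> borel_measurable borel" for n
    unfolding s_def by measurable
  have h: "0 < h n" "h n \<le> 1" for n
    by (auto simp: h_def)
  have "(\<integral>v. s n v \<partial>lborel) = 0" for n
    unfolding s_def
    using integrable_lborel_translate[OF int, of "h n *\<^sub>R e"] int
    by (simp add: integral_lborel_translate)
  moreover have "(\<lambda>n. \<integral>v. s n v \<partial>lborel) \<longlonglongrightarrow> (\<integral>v. \<psi>' v \<partial>lborel)"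
  proof (rule integral_dominated_convergence[where w="\<lambda>v. B * indicator (cball 0 (R + norm e)) v"])
    show "integrable lborel (\<lambda>v. B * indicator (cball 0 (R + norm e)) v)"
      by (intro integrable_mult_right integrable_real_indicator emeasure_bounded_finite) auto
    have h_lim: "filterlim h (at 0) sequentially"
      unfolding filterlim_at h_def using LIMSEQ_Suc[OF lim_const_over_n[of 1]] by auto
    show "AE v in lborel. (\<lambda>n. s n v) \<longlonglongrightarrow> \<psi>' v"
    proof (intro AE_I2)
      fix v :: 'a
      have "((\<lambda>y. (\<psi> (v + y *\<^sub>R e) - \<psi> v) / y) \<longlongrightarrow> \<psi>' v) (at 0)"
        using deriv[of v] by (simp add: has_field_derivative_iff)
      from filterlim_compose[OF this h_lim] show "(\<lambda>n. s n v) \<longlonglongrightarrow> \<psi>' v"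
        by (simp add: s_def)
    qed
    show "AE v in lborel. norm (s n v) \<le> B * indicator (cball 0 (R + norm e)) v" for n
    proof (intro AE_I2)
      fix v :: 'a
      show "norm (s n v) \<le> B * indicator (cball 0 (R + norm e)) v"
      proof (cases "norm v \<le> R + norm e")
        case True
        then show ?thesis
          using directional_difference_bound[OF deriv bound h(1)] h(1)[of n]
          by (simp add: s_def divide_le_eq)
      next
        case False
        have "norm v \<le> norm (v + h n *\<^sub>R e) + h n * norm e"
          using norm_triangle_ineq4[of "v + h n *\<^sub>R e" "h n *\<^sub>R e"] h[of n] by simp
        then have "R < norm (v + h n *\<^sub>R e)"
          using False h[of n] mult_left_le_one_le[of "norm e" "h n"] by simp
        moreover have "R < norm v"
          using False norm_ge_zero[of e] by linarith
        ultimately show ?thesis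
          using False by (simp add: s_def supp)
      qed
    qed
  qed measurable
  ultimately show ?thesis
    by (simp add: LIMSEQ_const_iff)
qed

lemma integral_polytrope_plus_1:
  assumes k: "0 < k" and c: "0 < c"
  shows "(\<integral>v. polytrope (k + 1) c v \<partial>lborel)
       = (k + 1) * c * (\<integral>v. (v$1)^2 / energy v * polytrope k c v \<partial>lborel)"
proof -
  have cont: "continuous_on UNIV (\<lambda>v::real^3. (v$1)^2 / energy v)"
    by (intro continuous_intros continuous_on_energy) (metis energy_pos less_irrefl)
  have int1: "integrable lborel (polytrope (k + 1) c)"
    using integrable_continuous_times_polytrope[of "k + 1" c "\<lambda>_. 1"] k c by simp
  have int2: "integrable lborel (\<lambda>v. (v$1)^2 / energy v * polytrope k c v)"
    using integrable_continuous_times_polytrope[OF _ c cont] k by simp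
  have "(\<integral>v. polytrope (k + 1) c v - (k + 1) * c * ((v$1)^2 / energy v * polytrope k c v) \<partial>lborel) = 0"
  proof (rule integral_directional_derivative_eq_0)
    show "integrable lborel (\<lambda>v::real^3. v$1 * polytrope (k + 1) c v)"
      using integrable_continuous_times_polytrope[of "k + 1" c "\<lambda>v. v$1"] k c
      by (simp add: continuous_on_component)
    show "\<And>v. 1 / c < norm v \<Longrightarrow> v$1 * polytrope (k + 1) c v = 0"
      using polytrope_eq_0[OF c] by simp
  qed (use polytrope_line_has_derivative[OF k] polytrope_line_derivative_bound[OF k c] in measurable)
  then show ?thesis
    unfolding Bochner_Integration.integral_diff[OF int1 integrable_mult_right[OF int2]]
      integral_mult_right_zero
    by simp
qed

lemma integral_chi_polytrope_minus_polytrope: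
  assumes k: "0 < k" and c: "0 < c"
  shows "(\<integral>v. chi k (polytrope k c v) - polytrope k c v \<partial>lborel)
       = - c * ((\<integral>v. energy v * polytrope k c v \<partial>lborel)
                + (\<integral>v. (v$1)^2 / energy v * polytrope k c v \<partial>lborel))"
proof -
  have int1: "integrable lborel (polytrope (k + 1) c)"
    using integrable_continuous_times_polytrope[of "k + 1" c "\<lambda>_. 1"] k c by simp
  have intE: "integrable lborel (\<lambda>v. energy v * polytrope k c v)"
    using integrable_continuous_times_polytrope[OF _ c continuous_on_energy] k by simp
  have "chi k (polytrope k c v) - polytrope k c v
      = - (1 / (k + 1)) * polytrope (k + 1) c v - c * (energy v * polytrope k c v)" for v
  proof -
    have "k / (k + 1) * polytrope (k + 1) c v - polytrope (k + 1) c v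
        = - (1 / (k + 1)) * polytrope (k + 1) c v"
      using k by (simp add: field_simps)
    then show ?thesis
      using chi_polytrope[OF k, of c v] polytrope_eq_plus_1[of k c v] by linarith
  qed
  then have "(\<integral>v. chi k (polytrope k c v) - polytrope k c v \<partial>lborel)
      = - (1 / (k + 1)) * (\<integral>v. polytrope (k + 1) c v \<partial>lborel)
        - c * (\<integral>v. energy v * polytrope k c v \<partial>lborel)"
    using int1 intE by simp
  also have "\<dots> = - c * ((\<integral>v. energy v * polytrope k c v \<partial>lborel)
                + (\<integral>v. (v$1)^2 / energy v * polytrope k c v \<partial>lborel))"
    unfolding integral_polytrope_plus_1[OF k c] using k by (simp add: field_simps)
  finally show ?thesis .
qed

lemma distr_norm_lborel_real3:
  "distr (lborel :: (real^3) measure) borel norm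
     = density lborel (\<lambda>r. ennreal (indicator {0..} r * (4 * pi * r^2)))"
  (is "?M = ?N")
proof (rule measure_eqI_generator_eq_countable[where E="range atMost" and \<Omega>=UNIV
      and A="range (\<lambda>n::nat. {..real n})"])
  have ball: "emeasure ?M {..a} = ennreal (4 / 3 * pi * (max 0 a)^3)" for a :: real
  proof -
    have "emeasure ?M {..a} = emeasure lborel {x::real^3. norm x \<le> a}"
      by (subst emeasure_distr) (auto simp: vimage_def)
    also have "\<dots> = ennreal (4 / 3 * pi * (max 0 a)^3)"
    proof (cases "0 \<le> a")
      case True
      have "{x::real^3. norm x \<le> a} = cball 0 a"
        by (auto simp: cball_def dist_norm)
      then show ?thesis
        using True by (simp add: emeasure_cball unit_ball_vol_3)
    next
      case False
      then have "{x::real^3. norm x \<le> a} = {}"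
        by (auto intro: order.trans[OF norm_ge_zero])
      then show ?thesis
        using False by simp
    qed
    finally show ?thesis .
  qed
  have shell: "emeasure ?N {..a} = ennreal (4 / 3 * pi * (max 0 a)^3)" for a :: real
  proof -
    have "emeasure ?N {..a} = (\<integral>\<^sup>+r. ennreal (indicator {0..} r * (4 * pi * r^2)) * indicator {..a} r \<partial>lborel)"
      by (subst emeasure_density) auto
    also have "\<dots> = (\<integral>\<^sup>+r. ennreal (4 * pi * r^2) * indicator {0..max 0 a} r \<partial>lborel)"
      by (rule nn_integral_cong) (auto simp: indicator_def)
    also have "\<dots> = ennreal (4 / 3 * pi * (max 0 a)^3 - 4 / 3 * pi * 0^3)"
      by (rule nn_integral_FTC_Icc[where F="\<lambda>r. 4 / 3 * pi * r^3"])
        (auto intro!: derivative_eq_intros simp: power2_eq_square power3_eq_cube)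
    finally show ?thesis
      by simp
  qed
  show "\<And>X. X \<in> range atMost \<Longrightarrow> emeasure ?M X = emeasure ?N X"
    using ball shell by auto
  show "\<And>X. X \<in> range (\<lambda>n::nat. {..real n}) \<Longrightarrow> emeasure ?M X \<noteq> \<infinity>"
    using ball by auto
  show "\<Union> (range (\<lambda>n::nat. {..real n})) = UNIV"
    by (auto simp: real_arch_simple)
qed (auto simp: Int_stable_def borel_eq_atMost)

lemma lborel_integral_norm_real3:
  fixes H :: "real \<Rightarrow> real"
  assumes [measurable]: "H \<in> borel_measurable borel"
  shows "(\<integral>x. H (norm x) \<partial>(lborel :: (real^3) measure))
       = (\<integral>r. indicator {0..} r * (4 * pi * r^2) * H r \<partial>lborel)"
proof -
  have "(\<integral>x. H (norm x) \<partial>(lborel :: (real^3) measure)) = (\<integral>r. H r \<partial>distr (lborel :: (real^3) measure) borel norm)"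
    by (subst integral_distr) auto
  also have "\<dots> = (\<integral>r. H r \<partial>density lborel (\<lambda>r. ennreal (indicator {0..} r * (4 * pi * r^2))))"
    by (simp only: distr_norm_lborel_real3)
  also have "\<dots> = (\<integral>r. indicator {0..} r * (4 * pi * r^2) * H r \<partial>lborel)"
    by (subst integral_density) auto
  finally show ?thesis .
qed

lemma (in pair_sigma_finite) integral_fst_nonneg:
  fixes G :: "'a \<times> 'b \<Rightarrow> real"
  assumes [measurable]: "G \<in> borel_measurable (M1 \<Otimes>\<^sub>M M2)"
    and nonneg: "\<And>z. 0 \<le> G z" and int: "\<And>x. integrable M2 (\<lambda>y. G (x, y))"
  shows "(\<integral>z. G z \<partial>(M1 \<Otimes>\<^sub>M M2)) = (\<integral>x. (\<integral>y. G (x, y) \<partial>M2) \<partial>M1)"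
proof -
  have "(\<integral>z. G z \<partial>(M1 \<Otimes>\<^sub>M M2)) = enn2real (\<integral>\<^sup>+z. G z \<partial>(M1 \<Otimes>\<^sub>M M2))"
    by (rule integral_eq_nn_integral) (auto simp: nonneg)
  also have "(\<integral>\<^sup>+z. G z \<partial>(M1 \<Otimes>\<^sub>M M2)) = (\<integral>\<^sup>+x. \<integral>\<^sup>+y. G (x, y) \<partial>M2 \<partial>M1)"
    by (rule M2.nn_integral_fst[symmetric]) measurable
  also have "\<dots> = (\<integral>\<^sup>+x. ennreal (\<integral>y. G (x, y) \<partial>M2) \<partial>M1)"
    by (intro nn_integral_cong nn_integral_eq_integral int) (simp add: nonneg)
  also have "enn2real \<dots> = (\<integral>x. (\<integral>y. G (x, y) \<partial>M2) \<partial>M1)"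
    by (rule integral_eq_nn_integral[symmetric]) (auto simp: nonneg)
  finally show ?thesis .
qed

lemma calD_radial_polytrope:
  fixes c lam :: "real \<Rightarrow> real"
  assumes k: "0 < k" and [measurable]: "c \<in> borel_measurable borel" "lam \<in> borel_measurable borel"
    and c_pos: "\<And>r. 0 < c r"
  defines "f \<equiv> \<lambda>x. polytrope k (c (norm x))"
  shows "calD k lam f = - (\<integral>r. indicator {0..} r * (4 * pi * r^2)
           * (exp (lam r) * c r * (rho_of f (r *\<^sub>R axis 1 1) + prad_of f (r *\<^sub>R axis 1 1))) \<partial>lborel)"
proof -
  define H where
    "H r = exp (lam r) * c r * (rho_of f (r *\<^sub>R axis 1 1) + prad_of f (r *\<^sub>R axis 1 1))" for r
  define G where
    "G z = exp (lam (norm (fst z))) * (f (fst z) (snd z) - chi k (f (fst z) (snd z)))"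
    for z :: "(real^3) \<times> (real^3)"
  have [measurable]: "H \<in> borel_measurable borel"
    unfolding H_def f_def rho_of_def prad_of_def by measurable
  have [measurable]: "G \<in> borel_measurable (lborel \<Otimes>\<^sub>M lborel)"
    unfolding G_def f_def chi_def by measurable
  have G_nonneg: "0 \<le> G z" for z
    unfolding G_def f_def using chi_polytrope_le[OF k less_imp_le[OF c_pos]] by simp
  have G_integrable: "integrable lborel (\<lambda>v. G (x, v))" for x
  proof -
    have "integrable lborel (\<lambda>v. exp (lam (norm x)) * (1 * polytrope k (c (norm x)) v
        - k / (k + 1) * (1 * polytrope (k + 1) (c (norm x)) v)))"
      using k c_pos
      by (intro integrable_mult_right Bochner_Integration.integrable_diff
          integrable_continuous_times_polytrope) auto
    then show ?thesis
      by (simp add: G_def f_def chi_polytrope[OF k])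
  qed
  have G_fibre: "(\<integral>v. G (x, v) \<partial>lborel) = H (norm x)" if "x \<noteq> 0" for x :: "real^3"
  proof -
    define r where "r = norm x"
    have r: "0 < r"
      using that by (simp add: r_def)
    have "((r *\<^sub>R axis 1 1) \<bullet> v / \<bar>r\<bar>)^2 = (v$1)^2" for v :: "real^3"
      using r by (simp add: inner_axis')
    then have rho_p: "rho_of f (r *\<^sub>R axis 1 1) + prad_of f (r *\<^sub>R axis 1 1)
        = (\<integral>v. energy v * polytrope k (c r) v \<partial>lborel)
          + (\<integral>v. (v$1)^2 / energy v * polytrope k (c r) v \<partial>lborel)"
      using r by (simp add: rho_of_def prad_of_def f_def)
    have "(\<integral>v. G (x, v) \<partial>lborel)
        = exp (lam r) * - (\<integral>v. chi k (polytrope k (c r) v) - polytrope k (c r) v \<partial>lborel)"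
      by (simp add: G_def f_def r_def Bochner_Integration.integral_minus[symmetric])
    also have "\<dots> = H r"
      unfolding integral_chi_polytrope_minus_polytrope[OF k c_pos] H_def rho_p by simp
    finally show ?thesis
      by (simp add: r_def)
  qed
  have "calD k lam f = - (\<integral>z. G z \<partial>(lborel \<Otimes>\<^sub>M lborel))"
    unfolding calD_def lborel_prod G_def
    by (subst Bochner_Integration.integral_minus[symmetric]) (simp add: algebra_simps)
  also have "(\<integral>z. G z \<partial>(lborel \<Otimes>\<^sub>M lborel)) = (\<integral>x. (\<integral>v. G (x, v) \<partial>lborel) \<partial>lborel)"
    by (rule lborel_pair.integral_fst_nonneg) (use G_nonneg G_integrable in auto)
  also have "\<dots> = (\<integral>x. H (norm x) \<partial>(lborel :: (real^3) measure))"
    by (rule integral_cong_AE) (use AE_lborel_singleton[of 0] G_fibre in \<open>auto elim!: AE_mp\<close>)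
  also have "\<dots> = (\<integral>r. indicator {0..} r * (4 * pi * r^2) * H r \<partial>lborel)"
    by (rule lborel_integral_norm_real3) measurable
  finally show ?thesis
    by (simp add: H_def)
qed

lemma f_static_eq_polytrope:
  assumes "continuous_on {0<..} mu"
  obtains c where "c \<in> borel_measurable borel" "\<And>r. 0 < c r"
    and "\<And>r. 0 \<le> r \<Longrightarrow> c r = exp (mu r - mu R0)"
    and "f_static mu R0 k = (\<lambda>x. polytrope k (c (norm x)))"
proof -
  (* mu is only known to be continuous on r > 0; freezing it on r <= 0 (seen only at x = 0)
     makes c Borel measurable. *)
  define c where "c r = exp ((if 0 < r then mu r else mu 0) - mu R0)" for r
  have "(\<lambda>r. indicator {0<..} r *\<^sub>R mu r) \<in> borel_measurable borel"
    using assms by (intro borel_measurable_continuous_on_indicator) auto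
  moreover have "c = (\<lambda>r. exp (indicator {0<..} r *\<^sub>R mu r + indicator {..0} r *\<^sub>R mu 0 - mu R0))"
    by (auto simp: c_def fun_eq_iff indicator_def)
  ultimately have "c \<in> borel_measurable borel"
    by simp
  then show ?thesis
  proof (rule that)
    show "0 < c r" for r
      by (simp add: c_def)
    show "c r = exp (mu r - mu R0)" if "0 \<le> r" for r
      using that by (auto simp: c_def)
    show "f_static mu R0 k = (\<lambda>x. polytrope k (c (norm x)))"
      by (auto simp: fun_eq_iff f_static_def polytrope_def c_def)
  qed
qed

lemma borel_measurable_mass_of [measurable]:
  assumes [measurable]: "rho \<in> borel_measurable borel"
  shows "mass_of rho \<in> borel_measurable borel"
proof -
  have "mass_of rho = (\<lambda>r. 4 * pi * (\<integral>s. (if 0 \<le> s \<and> s \<le> r then 1 else 0) * (s^2 * rho s) \<partial>lborel))"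
    by (auto simp: fun_eq_iff mass_of_def set_lebesgue_integral_def indicator_def
        intro!: Bochner_Integration.integral_cong)
  then show ?thesis
    by simp
qed

theorem lemma8p1:
  fixes k R0 :: real and mu0 :: "real \<Rightarrow> real"
  defines "f0 \<equiv> f_static mu0 R0 k"
    and "rho0 \<equiv> (\<lambda>r. rho_of (f_static mu0 R0 k) (r *\<^sub>R axis 1 1))"
    and "p0 \<equiv> (\<lambda>r. prad_of (f_static mu0 R0 k) (r *\<^sub>R axis 1 1))"
    and "m0 \<equiv> (mass_of (\<lambda>r. rho_of (f_static mu0 R0 k) (r *\<^sub>R axis 1 1)))"
    and "lam0 \<equiv> lambda_of (mass_of (\<lambda>r. rho_of (f_static mu0 R0 k) (r *\<^sub>R axis 1 1)))"
  assumes "0 < k" and "k \<le> 2" and "0 < R0"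
    and "\<forall>r>0. 2 * m0 r < r"
    and "\<forall>r>0. (mu0 has_real_derivative
                 exp (2 * lam0 r) * (m0 r / r^2 + 4 * pi * r * p0 r)) (at r)"
    and "(mu0 \<longlongrightarrow> 0) at_top"
    and "\<forall>x v. R0 \<le> norm x \<longrightarrow> f0 x v = 0"
    and "\<forall>x. norm x < R0 \<longrightarrow> (\<exists>v. 0 < f0 x v)"
  shows "calD k lam0 f0
           = - 4 * pi * exp (- mu0 R0)
               * (\<integral>r\<in>{0..R0}. r^2 * (p0 r + rho0 r) * exp (mu0 r + lam0 r) \<partial>lborel)"
proof -
  have "continuous_on {0<..} mu0"
    using assms(10) by (intro continuous_at_imp_continuous_on) (auto dest: DERIV_isCont)
  then obtain c where c_meas [measurable]: "c \<in> borel_measurable borel" and c_pos: "\<And>r. 0 < c r"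
    and c_eq: "\<And>r. 0 \<le> r \<Longrightarrow> c r = exp (mu0 r - mu0 R0)"
    and f0_eq: "f_static mu0 R0 k = (\<lambda>x. polytrope k (c (norm x)))"
    by (rule f_static_eq_polytrope[of mu0 R0 k]) auto
  have lam0_meas: "lam0 \<in> borel_measurable borel"
    unfolding lam0_def f0_eq lambda_of_def rho_of_def by measurable
  have vanish: "rho0 r = 0" "p0 r = 0" if "R0 \<le> r" for r
    using assms(12) that unfolding rho0_def p0_def rho_of_def prad_of_def f0_def by auto
  have "calD k lam0 f0 = - (\<integral>r. indicator {0..} r * (4 * pi * r^2)
      * (exp (lam0 r) * c r * (rho0 r + p0 r)) \<partial>lborel)"
    unfolding f0_def rho0_def p0_def f0_eq
    by (rule calD_radial_polytrope[OF assms(6) c_meas lam0_meas c_pos])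
  also have "\<dots> = - (4 * pi * exp (- mu0 R0)
      * (\<integral>r. indicator {0..R0} r * (r^2 * (p0 r + rho0 r) * exp (mu0 r + lam0 r)) \<partial>lborel))"
    unfolding integral_mult_right_zero[symmetric]
    by (intro arg_cong[where f=uminus] Bochner_Integration.integral_cong)
      (auto simp: indicator_def vanish c_eq exp_diff exp_add exp_minus field_simps)
  finally show ?thesis
    by (simp add: set_lebesgue_integral_def)
qed

end
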